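(* Let $\mathcal D[t]\subset\mathcal H\subset\mathcal D^\times[t^\times]$ be a rigged Hilbert space with $\mathcal D[t]$ a reflexive Fréchet space, $(X,\mu)$ a $\sigma$-finite measure space, $\omega:X\to\mathcal D^\times$ a Riesz distribution basis and $\theta$ its dual. For measurable $m:X\to\mathbb C$ write $M_m:=M_{m,\omega,\theta}$. If $m_1,m_2$ are measurable functions with $M_{m_1},M_{m_2}\in\mathcal L^\dagger(\mathcal D)$, then for every $f\in\mathcal D$ one has $f\in D(M_{m_1m_2})$ and $M_{m_1}M_{m_2}f=M_{m_1m_2}f$.
   Context: Rigged Hilbert space: $\mathcal D$ dense subspace of Hilbert space $\mathcal H$ with a locally convex topology finer than the norm topology, $\mathcal D^\times$ its conjugate dual with strong dual topology, $\mathcal H\subset\mathcal D^\times$, pairing extending the inner product, $\langle f,F\rangle:=\overline{\langle F,f\rangle}$. Weakly measurable map $\omega:X\to\mathcal D^\times$: $x\mapsto\langle f,\omega_x\rangle$ measurable for all $f\in\mathcal D$. Distribution frame: there are $A,B>0$ with $A\|f\|^2\le\int_X|\langle f,\omega_x\rangle|^2d\mu\le B\|f\|^2$ for $f\in\mathcal D$. $\omega$ is $\mu$-independent if the only measurable $\xi$ with $\int_X\xi(x)\langle g,\omega_x\rangle d\mu=0$ for all $g\in\mathcal D$ is $\xi=0$ a.e. A Riesz distribution basis is a $\mu$-independent distribution frame; its dual $\theta:X\to\mathcal D^\times$ is the unique distribution frame with $\langle f,g\rangle=\int_X\langle f,\theta_x\rangle\langle\omega_x,g\rangle d\mu$ for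 all $f,g\in\mathcal D$ (it is also a Riesz distribution basis and $\omega$ is its dual). Distribution multiplier $M_{m,\omega,\theta}$: domain is the set of $f\in\mathcal D$ such that $\int_X m(x)\langle f,\omega_x\rangle\langle\theta_x,g\rangle d\mu$ converges for all $g\in\mathcal D$ and is bounded in $g$ w.r.t. the $\mathcal H$-norm; $M_{m,\omega,\theta}f\in\mathcal H$ is its Riesz representative. $\mathcal L^\dagger(\mathcal D)$ is the set of closable operators $A$ in $\mathcal H$ with $D(A)=\mathcal D$, $D(A^* )\supseteq\mathcal D$, and $A\mathcal D\subseteq\mathcal D$, $A^*\mathcal D\subseteq\mathcal D$. *)

theory Defs
  imports "HOL-Probability.Probability"
begin

section \<open>Complex Hilbert space H, given by an abelian group 'h, a complex scalar
  multiplication sc and an inner product ip (linear in the first argument)\<close>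

definition hnorm :: "('h \<Rightarrow> 'h \<Rightarrow> complex) \<Rightarrow> 'h \<Rightarrow> real" where
  "hnorm ip x = sqrt (Re (ip x x))"

definition complex_hilbert ::
  "(complex \<Rightarrow> 'h::ab_group_add \<Rightarrow> 'h) \<Rightarrow> ('h \<Rightarrow> 'h \<Rightarrow> complex) \<Rightarrow> bool" where
  "complex_hilbert sc ip \<longleftrightarrow>
     (\<forall>x. sc 1 x = x) \<and>
     (\<forall>a b x. sc a (sc b x) = sc (a * b) x) \<and>
     (\<forall>a x y. sc a (x + y) = sc a x + sc a y) \<and>
     (\<forall>a b x. sc (a + b) x = sc a x + sc b x) \<and>
     (\<forall>x y z. ip (x + y) z = ip x z + ip y z) \<and>
     (\<forall>a x y. ip (sc a x) y = a * ip x y) \<and>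
     (\<forall>x y. ip y x = cnj (ip x y)) \<and>
     (\<forall>x. Im (ip x x) = 0 \<and> Re (ip x x) \<ge> 0) \<and>
     (\<forall>x. ip x x = 0 \<longrightarrow> x = 0) \<and>
     (\<forall>u::nat \<Rightarrow> 'h. (\<forall>e>0. \<exists>N. \<forall>i\<ge>N. \<forall>j\<ge>N. hnorm ip (u i - u j) < e)
          \<longrightarrow> (\<exists>l. (\<lambda>i. hnorm ip (u i - l)) \<longlonglongrightarrow> 0))"

section \<open>The space D[t]: a Frechet space whose topology is given by a countable
  family of seminorms p n\<close>

definition pbound :: "(nat \<Rightarrow> 'h \<Rightarrow> real) \<Rightarrow> nat \<Rightarrow> 'h \<Rightarrow> real" where
  "pbound p N x = (\<Sum>n\<le>N. p n x)"

definition frechet_seminorms ::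
  "(complex \<Rightarrow> 'h::ab_group_add \<Rightarrow> 'h) \<Rightarrow> 'h set \<Rightarrow> (nat \<Rightarrow> 'h \<Rightarrow> real) \<Rightarrow> bool" where
  "frechet_seminorms sc D p \<longleftrightarrow>
     (\<forall>n. \<forall>x\<in>D. p n x \<ge> 0) \<and>
     (\<forall>n. \<forall>x\<in>D. \<forall>y\<in>D. p n (x + y) \<le> p n x + p n y) \<and>
     (\<forall>n a. \<forall>x\<in>D. p n (sc a x) = cmod a * p n x) \<and>
     (\<forall>x\<in>D. (\<forall>n. p n x = 0) \<longrightarrow> x = 0) \<and>
     (\<forall>u::nat \<Rightarrow> 'h. (\<forall>i. u i \<in> D) \<and>
          (\<forall>n. \<forall>e>0. \<exists>N. \<forall>i\<ge>N. \<forall>j\<ge>N. p n (u i - u j) < e)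
          \<longrightarrow> (\<exists>l\<in>D. \<forall>n. (\<lambda>i. p n (u i - l)) \<longlonglongrightarrow> 0))"

text \<open>Continuous linear functionals on D[t] (the dual D').  An element F of the conjugate
  dual is represented by the linear functional f \<mapsto> <f,F>.\<close>

definition dual_space ::
  "(complex \<Rightarrow> 'h::ab_group_add \<Rightarrow> 'h) \<Rightarrow> 'h set \<Rightarrow> (nat \<Rightarrow> 'h \<Rightarrow> real) \<Rightarrow> ('h \<Rightarrow> complex) set" where
  "dual_space sc D p =
     {\<Phi>. (\<forall>x\<in>D. \<forall>y\<in>D. \<Phi> (x + y) = \<Phi> x + \<Phi> y) \<and>
          (\<forall>a. \<forall>x\<in>D. \<Phi> (sc a x) = a * \<Phi> x) \<and>
          (\<exists>N C. \<forall>x\<in>D. cmod (\<Phi> x) \<le> C * pbound p N x)}"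

definition bounded_in :: "'h set \<Rightarrow> (nat \<Rightarrow> 'h \<Rightarrow> real) \<Rightarrow> 'h set \<Rightarrow> bool" where
  "bounded_in D p B \<longleftrightarrow> B \<subseteq> D \<and> (\<forall>n. \<exists>C. \<forall>f\<in>B. p n f \<le> C)"

definition strongly_bounded ::
  "(complex \<Rightarrow> 'h::ab_group_add \<Rightarrow> 'h) \<Rightarrow> 'h set \<Rightarrow> (nat \<Rightarrow> 'h \<Rightarrow> real) \<Rightarrow> ('h \<Rightarrow> complex) set \<Rightarrow> bool" where
  "strongly_bounded sc D p A \<longleftrightarrow> A \<subseteq> dual_space sc D p \<and>
     (\<forall>B. bounded_in D p B \<longrightarrow> (\<exists>C. \<forall>\<Phi>\<in>A. \<forall>f\<in>B. cmod (\<Phi> f) \<le> C))"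

definition strong_bidual ::
  "(complex \<Rightarrow> 'h::ab_group_add \<Rightarrow> 'h) \<Rightarrow> 'h set \<Rightarrow> (nat \<Rightarrow> 'h \<Rightarrow> real) \<Rightarrow> (('h \<Rightarrow> complex) \<Rightarrow> complex) set" where
  "strong_bidual sc D p =
     {\<Psi>. (\<forall>\<Phi>1\<in>dual_space sc D p. \<forall>\<Phi>2\<in>dual_space sc D p.
            \<Psi> (\<lambda>f. \<Phi>1 f + \<Phi>2 f) = \<Psi> \<Phi>1 + \<Psi> \<Phi>2) \<and>
         (\<forall>a. \<forall>\<Phi>\<in>dual_space sc D p. \<Psi> (\<lambda>f. a * \<Phi> f) = a * \<Psi> \<Phi>) \<and>
         (\<exists>B C. bounded_in D p B \<and>
            (\<forall>\<Phi>\<in>dual_space sc D p. \<forall>r. (\<forall>f\<in>B. cmod (\<Phi> f) \<le> r) \<longrightarrow> cmod (\<Psi> \<Phi>) \<le> C * r))}"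

text \<open>Reflexivity: the canonical map D \<rightarrow> D'' (f \<mapsto> evaluation at f) is onto the strong
  bidual and a topological isomorphism onto it (the strong bidual topology restricted to
  D is given by the seminorms f \<mapsto> sup over A of |F f|, A strongly bounded).\<close>

definition reflexive_space ::
  "(complex \<Rightarrow> 'h::ab_group_add \<Rightarrow> 'h) \<Rightarrow> 'h set \<Rightarrow> (nat \<Rightarrow> 'h \<Rightarrow> real) \<Rightarrow> bool" where
  "reflexive_space sc D p \<longleftrightarrow>
     (\<forall>\<Psi>\<in>strong_bidual sc D p. \<exists>g\<in>D. \<forall>\<Phi>\<in>dual_space sc D p. \<Psi> \<Phi> = \<Phi> g) \<and>
     (\<forall>n. \<exists>A C. strongly_bounded sc D p A \<and>
          (\<forall>f\<in>D. \<forall>r. (\<forall>\<Phi>\<in>A. cmod (\<Phi> f) \<le> r) \<longrightarrow> p n f \<le> C * r)) \<and>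
     (\<forall>A. strongly_bounded sc D p A \<longrightarrow>
          (\<exists>N C. \<forall>\<Phi>\<in>A. \<forall>f\<in>D. cmod (\<Phi> f) \<le> C * pbound p N f))"

text \<open>Rigged Hilbert space D[t] \<subset> H \<subset> D^\<times> with D[t] a reflexive Frechet space:
  D is a dense subspace of H and its topology is finer than the norm topology.\<close>

definition rigged_reflexive_frechet ::
  "(complex \<Rightarrow> 'h::ab_group_add \<Rightarrow> 'h) \<Rightarrow> ('h \<Rightarrow> 'h \<Rightarrow> complex) \<Rightarrow> 'h set \<Rightarrow> (nat \<Rightarrow> 'h \<Rightarrow> real) \<Rightarrow> bool" where
  "rigged_reflexive_frechet sc ip D p \<longleftrightarrow>
     complex_hilbert sc ip \<and>
     0 \<in> D \<and> (\<forall>x\<in>D. \<forall>y\<in>D. x + y \<in> D) \<and> (\<forall>a. \<forall>x\<in>D. sc a x \<in> D) \<and>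
     (\<forall>x. \<forall>e>0. \<exists>d\<in>D. hnorm ip (x - d) < e) \<and>
     frechet_seminorms sc D p \<and>
     (\<exists>N C. \<forall>x\<in>D. hnorm ip x \<le> C * pbound p N x) \<and>
     reflexive_space sc D p"

section \<open>Distribution frames, Riesz distribution bases, duals.
  A map \<omega> : X \<rightarrow> D^\<times> is represented by om with om x f = <f, \<omega>_x>.\<close>

definition weakly_meas ::
  "(complex \<Rightarrow> 'h::ab_group_add \<Rightarrow> 'h) \<Rightarrow> 'h set \<Rightarrow> (nat \<Rightarrow> 'h \<Rightarrow> real) \<Rightarrow> 'x measure \<Rightarrow> ('x \<Rightarrow> 'h \<Rightarrow> complex) \<Rightarrow> bool" where
  "weakly_meas sc D p M om \<longleftrightarrow>
     (\<forall>x\<in>space M. om x \<in> dual_space sc D p) \<and>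
     (\<forall>f\<in>D. (\<lambda>x. om x f) \<in> borel_measurable M)"

definition distribution_frame ::
  "(complex \<Rightarrow> 'h::ab_group_add \<Rightarrow> 'h) \<Rightarrow> ('h \<Rightarrow> 'h \<Rightarrow> complex) \<Rightarrow> 'h set \<Rightarrow> (nat \<Rightarrow> 'h \<Rightarrow> real)
    \<Rightarrow> 'x measure \<Rightarrow> ('x \<Rightarrow> 'h \<Rightarrow> complex) \<Rightarrow> bool" where
  "distribution_frame sc ip D p M om \<longleftrightarrow>
     weakly_meas sc D p M om \<and>
     (\<exists>A B. A > 0 \<and> B > 0 \<and> (\<forall>f\<in>D.
        ennreal (A * (hnorm ip f)\<^sup>2) \<le> (\<integral>\<^sup>+ x. ennreal ((cmod (om x f))\<^sup>2) \<partial>M) \<and>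
        (\<integral>\<^sup>+ x. ennreal ((cmod (om x f))\<^sup>2) \<partial>M) \<le> ennreal (B * (hnorm ip f)\<^sup>2)))"

definition mu_independent ::
  "'h set \<Rightarrow> 'x measure \<Rightarrow> ('x \<Rightarrow> 'h \<Rightarrow> complex) \<Rightarrow> bool" where
  "mu_independent D M om \<longleftrightarrow>
     (\<forall>\<xi>::'x \<Rightarrow> complex. \<xi> \<in> borel_measurable M \<and>
        (\<forall>g\<in>D. integrable M (\<lambda>x. \<xi> x * om x g) \<and> (LINT x|M. \<xi> x * om x g) = 0)
        \<longrightarrow> (AE x in M. \<xi> x = 0))"

definition riesz_distribution_basis ::
  "(complex \<Rightarrow> 'h::ab_group_add \<Rightarrow> 'h) \<Rightarrow> ('h \<Rightarrow> 'h \<Rightarrow> complex) \<Rightarrow> 'h set \<Rightarrow> (nat \<Rightarrow> 'h \<Rightarrow> real)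
    \<Rightarrow> 'x measure \<Rightarrow> ('x \<Rightarrow> 'h \<Rightarrow> complex) \<Rightarrow> bool" where
  "riesz_distribution_basis sc ip D p M om \<longleftrightarrow>
     distribution_frame sc ip D p M om \<and> mu_independent D M om"

text \<open>th is the dual of om: a distribution frame with
  <f,g> = \<integral> <f,\<theta>_x><\<omega>_x,g> d\<mu>, where <\<omega>_x,g> = cnj <g,\<omega>_x>.\<close>

definition dual_frame ::
  "(complex \<Rightarrow> 'h::ab_group_add \<Rightarrow> 'h) \<Rightarrow> ('h \<Rightarrow> 'h \<Rightarrow> complex) \<Rightarrow> 'h set \<Rightarrow> (nat \<Rightarrow> 'h \<Rightarrow> real)
    \<Rightarrow> 'x measure \<Rightarrow> ('x \<Rightarrow> 'h \<Rightarrow> complex) \<Rightarrow> ('x \<Rightarrow> 'h \<Rightarrow> complex) \<Rightarrow> bool" where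
  "dual_frame sc ip D p M om th \<longleftrightarrow>
     distribution_frame sc ip D p M th \<and>
     (\<forall>f\<in>D. \<forall>g\<in>D. integrable M (\<lambda>x. th x f * cnj (om x g)) \<and>
        ip f g = (LINT x|M. th x f * cnj (om x g)))"

definition mult_dom ::
  "('h \<Rightarrow> 'h \<Rightarrow> complex) \<Rightarrow> 'h set \<Rightarrow> 'x measure \<Rightarrow> ('x \<Rightarrow> complex)
    \<Rightarrow> ('x \<Rightarrow> 'h \<Rightarrow> complex) \<Rightarrow> ('x \<Rightarrow> 'h \<Rightarrow> complex) \<Rightarrow> 'h set" where
  "mult_dom ip D M m om th =
     {f\<in>D. (\<forall>g\<in>D. integrable M (\<lambda>x. m x * om x f * cnj (th x g))) \<and>
           (\<exists>C. \<forall>g\<in>D. cmod (LINT x|M. m x * om x f * cnj (th x g)) \<le> C * hnorm ip g)}"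

definition mult_op ::
  "('h \<Rightarrow> 'h \<Rightarrow> complex) \<Rightarrow> 'h set \<Rightarrow> 'x measure \<Rightarrow> ('x \<Rightarrow> complex)
    \<Rightarrow> ('x \<Rightarrow> 'h \<Rightarrow> complex) \<Rightarrow> ('x \<Rightarrow> 'h \<Rightarrow> complex) \<Rightarrow> 'h \<Rightarrow> 'h" where
  "mult_op ip D M m om th f =
     (THE h. \<forall>g\<in>D. ip h g = (LINT x|M. m x * om x f * cnj (th x g)))"

definition closable_op :: "('h::ab_group_add \<Rightarrow> 'h \<Rightarrow> complex) \<Rightarrow> 'h set \<Rightarrow> ('h \<Rightarrow> 'h) \<Rightarrow> bool" where
  "closable_op ip Adom A \<longleftrightarrow>
     (\<forall>(u::nat \<Rightarrow> 'h) y. (\<forall>n. u n \<in> Adom) \<and> (\<lambda>n. hnorm ip (u n)) \<longlonglongrightarrow> 0 \<and>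
        (\<lambda>n. hnorm ip (A (u n) - y)) \<longlonglongrightarrow> 0 \<longrightarrow> y = 0)"

definition adjoint_dom :: "('h \<Rightarrow> 'h \<Rightarrow> complex) \<Rightarrow> 'h set \<Rightarrow> ('h \<Rightarrow> 'h) \<Rightarrow> 'h set" where
  "adjoint_dom ip Adom A = {y. \<exists>z. \<forall>x\<in>Adom. ip (A x) y = ip x z}"

definition adjoint_op :: "('h \<Rightarrow> 'h \<Rightarrow> complex) \<Rightarrow> 'h set \<Rightarrow> ('h \<Rightarrow> 'h) \<Rightarrow> 'h \<Rightarrow> 'h" where
  "adjoint_op ip Adom A y = (THE z. \<forall>x\<in>Adom. ip (A x) y = ip x z)"

definition in_Ldagger :: "('h::ab_group_add \<Rightarrow> 'h \<Rightarrow> complex) \<Rightarrow> 'h set \<Rightarrow> 'h set \<Rightarrow> ('h \<Rightarrow> 'h) \<Rightarrow> bool" where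
  "in_Ldagger ip D Adom A \<longleftrightarrow>
     closable_op ip Adom A \<and> Adom = D \<and> D \<subseteq> adjoint_dom ip Adom A \<and>
     (\<forall>f\<in>D. A f \<in> D) \<and> (\<forall>f\<in>D. adjoint_op ip Adom A f \<in> D)"

end

theory Submission
  imports Defs
begin

text \<open>For a multiplier M_m in L\<dagger>(D) the adjoint maps D into D, and comparing
  <M_m g, k> = \<integral> m <g,\<omega>_x> <\<theta>_x,k> d\<mu> with the reconstruction formula for
  <g, M_m\<dagger> k> shows, by \<mu>-independence of \<omega>, that <M_m\<dagger> k, \<theta>_x> = cnj (m x) <k, \<theta>_x>
  almost everywhere. Hence for f, g in D
  <M_m1 M_m2 f, g> = <f, M_m2\<dagger> M_m1\<dagger> g> = \<integral> m1 m2 <f,\<omega>_x> <\<theta>_x,g> d\<mu>,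
  which is bounded by the norm of g, so f lies in the domain of M_m1m2 and M_m1m2 f = M_m1 M_m2 f.
  Since M_m f is defined as a Riesz representative in an abstract Hilbert space, the Riesz
  representation of functionals bounded on the dense subspace D is proved along the way.\<close>

lemma quadratic_nonneg_discriminant:
  fixes z :: complex and a q :: real
  assumes nonneg: "\<And>t. 0 \<le> a + 2 * Re (cnj t * z) + (cmod t)\<^sup>2 * q" and q: "q > 0"
  shows "(cmod z)\<^sup>2 \<le> a * q"
proof -
  define t where "t = - z / complex_of_real q"
  have "cnj t * z = - (z * cnj z) / complex_of_real q"
    by (simp add: t_def mult.commute)
  also have "\<dots> = - complex_of_real ((cmod z)\<^sup>2 / q)"
    by (simp flip: complex_norm_square)
  finally have "cnj t * z = - complex_of_real ((cmod z)\<^sup>2 / q)" .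
  moreover have "(cmod t)\<^sup>2 = (cmod z)\<^sup>2 / q\<^sup>2"
    using q by (simp add: t_def norm_divide power_divide)
  ultimately have "0 \<le> a - (cmod z)\<^sup>2 / q"
    using nonneg[of t] q by (simp add: power2_eq_square)
  then show ?thesis
    using q by (simp add: field_simps)
qed

locale complex_inner_space =
  fixes sc :: "complex \<Rightarrow> 'h::ab_group_add \<Rightarrow> 'h" and ip :: "'h \<Rightarrow> 'h \<Rightarrow> complex"
  assumes complex_hilbert: "complex_hilbert sc ip"
begin

lemma scale_one: "sc 1 x = x"
  using complex_hilbert unfolding complex_hilbert_def by (elim conjE) metis

lemma scale_left_distrib: "sc (a + b) x = sc a x + sc b x"
  using complex_hilbert unfolding complex_hilbert_def by (elim conjE) metis

lemma ip_add_left: "ip (x + y) z = ip x z + ip y z"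
  using complex_hilbert unfolding complex_hilbert_def by (elim conjE) metis

lemma ip_scale_left: "ip (sc a x) y = a * ip x y"
  using complex_hilbert unfolding complex_hilbert_def by (elim conjE) metis

lemma ip_commute: "ip y x = cnj (ip x y)"
  using complex_hilbert unfolding complex_hilbert_def by (elim conjE) metis

lemma ip_self_Im: "Im (ip x x) = 0"
  using complex_hilbert unfolding complex_hilbert_def by (elim conjE) metis

lemma ip_self_Re_nonneg: "Re (ip x x) \<ge> 0"
  using complex_hilbert unfolding complex_hilbert_def by (elim conjE) metis

lemma ip_self_eq_zero: "ip x x = 0 \<Longrightarrow> x = 0"
  using complex_hilbert unfolding complex_hilbert_def by (elim conjE) metis

lemma cauchy_complete:
  assumes "\<forall>e>0. \<exists>N. \<forall>i\<ge>N. \<forall>j\<ge>N. hnorm ip (u i - u j) < e"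
  shows "\<exists>l. (\<lambda>i. hnorm ip (u i - l)) \<longlonglongrightarrow> 0"
  using complex_hilbert assms unfolding complex_hilbert_def by (elim conjE) (drule spec[of _ u], blast)

lemma ip_zero_left [simp]: "ip 0 y = 0"
  using ip_add_left[of 0 0 y] by simp

lemma ip_minus_left: "ip (- x) y = - ip x y"
  using ip_add_left[of x "- x" y] by (simp add: eq_neg_iff_add_eq_0 add.commute)

lemma ip_diff_left: "ip (x - y) z = ip x z - ip y z"
  using ip_add_left[of x "- y" z] ip_minus_left[of y z] by simp

lemma ip_add_right: "ip x (y + z) = ip x y + ip x z"
  by (metis ip_commute ip_add_left complex_cnj_add)

lemma ip_zero_right [simp]: "ip x 0 = 0"
  by (metis ip_commute ip_zero_left complex_cnj_zero)

lemma ip_scale_right: "ip x (sc a y) = cnj a * ip x y"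
  by (metis ip_commute ip_scale_left complex_cnj_mult)

lemma ip_diff_right: "ip x (y - z) = ip x y - ip x z"
  by (metis ip_commute ip_diff_left complex_cnj_diff)

lemma scale_zero_left: "sc 0 x = 0"
  using scale_left_distrib[of 0 0 x] by simp

lemma scale_minus_one: "sc (- 1) x = - x"
  using scale_left_distrib[of 1 "- 1" x] scale_one[of x] scale_zero_left[of x]
  by (simp add: eq_neg_iff_add_eq_0 add.commute)

definition sqnorm :: "'h \<Rightarrow> real" where
  "sqnorm x = Re (ip x x)"

lemma sqnorm_nonneg: "sqnorm x \<ge> 0"
  by (simp add: sqnorm_def ip_self_Re_nonneg)

lemma ip_self_eq_sqnorm: "ip x x = complex_of_real (sqnorm x)"
  using ip_self_Im[of x] by (simp add: sqnorm_def complex_eq_iff)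

lemma hnorm_eq_sqrt_sqnorm: "hnorm ip x = sqrt (sqnorm x)"
  by (simp add: hnorm_def sqnorm_def)

lemma hnorm_nonneg: "hnorm ip x \<ge> 0"
  by (simp add: hnorm_eq_sqrt_sqnorm sqnorm_nonneg)

lemma hnorm_power2: "(hnorm ip x)\<^sup>2 = sqnorm x"
  by (simp add: hnorm_eq_sqrt_sqnorm sqnorm_nonneg)

lemma sqnorm_eq_zero_imp: "sqnorm x = 0 \<Longrightarrow> x = 0"
  using ip_self_eq_sqnorm ip_self_eq_zero by simp

lemma sqnorm_add_scale:
  "sqnorm (x + sc t y) = sqnorm x + 2 * Re (cnj t * ip x y) + (cmod t)\<^sup>2 * sqnorm y"
proof -
  have "ip (x + sc t y) (x + sc t y) =
      ip x x + cnj t * ip x y + cnj (cnj t * ip x y) + t * cnj t * ip y y"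
    by (simp add: ip_add_left ip_add_right ip_scale_left ip_scale_right algebra_simps
        ip_commute[of x y])
  moreover have "t * cnj t * ip y y = complex_of_real ((cmod t)\<^sup>2 * sqnorm y)"
    unfolding ip_self_eq_sqnorm complex_norm_square[symmetric] by simp
  ultimately show ?thesis
    by (simp add: sqnorm_def)
qed

lemma sqnorm_scale: "sqnorm (sc t y) = (cmod t)\<^sup>2 * sqnorm y"
  using sqnorm_add_scale[of 0 t y] by (simp add: sqnorm_def)

lemma sqnorm_diff: "sqnorm (x - y) = sqnorm x - 2 * Re (ip x y) + sqnorm y"
  using sqnorm_add_scale[of x "- 1" y] by (simp add: scale_minus_one)

lemma parallelogram_law: "sqnorm (x + y) + sqnorm (x - y) = 2 * sqnorm x + 2 * sqnorm y"
  using sqnorm_add_scale[of x 1 y] sqnorm_diff[of x y] by (simp add: scale_one)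

lemma cauchy_schwarz: "cmod (ip x y) \<le> hnorm ip x * hnorm ip y"
proof (cases "sqnorm y = 0")
  case True
  then show ?thesis
    using sqnorm_eq_zero_imp[OF True] by (simp add: hnorm_nonneg)
next
  case False
  then have "(cmod (ip x y))\<^sup>2 \<le> sqnorm x * sqnorm y"
    using sqnorm_nonneg[of y] sqnorm_add_scale[of x _ y] sqnorm_nonneg[of "x + sc _ y"]
    by (intro quadratic_nonneg_discriminant) auto
  then have "sqrt ((cmod (ip x y))\<^sup>2) \<le> sqrt (sqnorm x * sqnorm y)"
    by (rule real_sqrt_le_mono)
  then show ?thesis
    by (simp add: hnorm_eq_sqrt_sqnorm real_sqrt_mult)
qed

lemma ip_tendsto_left:
  assumes "(\<lambda>n. hnorm ip (u n - x)) \<longlonglongrightarrow> 0"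
  shows "(\<lambda>n. ip (u n) y) \<longlonglongrightarrow> ip x y"
proof -
  have "(\<lambda>n. ip (u n - x) y) \<longlonglongrightarrow> 0"
  proof (rule Lim_null_comparison)
    show "\<forall>\<^sub>F n in sequentially. norm (ip (u n - x) y) \<le> hnorm ip (u n - x) * hnorm ip y"
      using cauchy_schwarz by simp
    show "(\<lambda>n. hnorm ip (u n - x) * hnorm ip y) \<longlonglongrightarrow> 0"
      using tendsto_mult_left_zero[OF assms] by simp
  qed
  then show ?thesis
    by (simp add: ip_diff_left LIM_zero_iff)
qed

end

locale dense_subspace = complex_inner_space sc ip
    for sc :: "complex \<Rightarrow> 'h::ab_group_add \<Rightarrow> 'h" and ip +
  fixes D :: "'h set"
  assumes zero_mem: "0 \<in> D"
    and add_mem: "x \<in> D \<Longrightarrow> y \<in> D \<Longrightarrow> x + y \<in> D"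
    and scale_mem: "x \<in> D \<Longrightarrow> sc a x \<in> D"
    and dense: "e > 0 \<Longrightarrow> \<exists>d\<in>D. hnorm ip (x - d) < e"
begin

lemma orthogonal_to_dense_eq_zero:
  assumes orth: "\<And>x. x \<in> D \<Longrightarrow> ip x w = 0"
  shows "w = 0"
proof -
  have small: "sqnorm w < e\<^sup>2" if "e > 0" for e
  proof -
    obtain d where d: "d \<in> D" "hnorm ip (w - d) < e"
      using dense[OF \<open>e > 0\<close>] by blast
    have "ip w d = 0"
      using orth[OF \<open>d \<in> D\<close>] ip_commute[of d w] by simp
    then have "sqnorm w \<le> sqnorm (w - d)"
      using sqnorm_nonneg[of d] by (simp add: sqnorm_diff)
    also have "\<dots> = (hnorm ip (w - d))\<^sup>2"
      by (simp add: hnorm_power2)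
    also have "\<dots> < e\<^sup>2"
      using d(2) hnorm_nonneg by (intro power_strict_mono) auto
    finally show ?thesis .
  qed
  have "sqnorm w = 0"
    using small[of "sqrt (sqnorm w)"] sqnorm_nonneg[of w] by fastforce
  then show ?thesis
    by (rule sqnorm_eq_zero_imp)
qed

lemma ip_right_cancel_dense: "(\<And>x. x \<in> D \<Longrightarrow> ip x z = ip x z') \<Longrightarrow> z = z'"
  using orthogonal_to_dense_eq_zero[of "z - z'"] by (simp add: ip_diff_right)

lemma ip_left_cancel_dense: "(\<And>x. x \<in> D \<Longrightarrow> ip z x = ip z' x) \<Longrightarrow> z = z'"
  by (rule ip_right_cancel_dense) (metis ip_commute)

end

locale dense_bounded_antilinear = dense_subspace sc ip D
    for sc :: "complex \<Rightarrow> 'h::ab_group_add \<Rightarrow> 'h" and ip D +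
  fixes \<phi> :: "'h \<Rightarrow> complex" and C :: real
  assumes phi_add: "a \<in> D \<Longrightarrow> b \<in> D \<Longrightarrow> \<phi> (a + b) = \<phi> a + \<phi> b"
    and phi_scale: "a \<in> D \<Longrightarrow> \<phi> (sc t a) = cnj t * \<phi> a"
    and phi_bounded: "a \<in> D \<Longrightarrow> cmod (\<phi> a) \<le> C * hnorm ip a"
begin

text \<open>Dirichlet's principle: \<phi> is represented by the limit of a minimizing sequence of
  the energy, whose minimizing sequences are Cauchy by the parallelogram law.\<close>

definition energy :: "'h \<Rightarrow> real" where
  "energy k = sqnorm k - 2 * Re (\<phi> k)"

lemma energy_bounded_below:
  assumes "k \<in> D"
  shows "- (max C 0)\<^sup>2 \<le> energy k"
proof -
  have "Re (\<phi> k) \<le> max C 0 * hnorm ip k"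
    using complex_Re_le_cmod[of "\<phi> k"] phi_bounded[OF assms] hnorm_nonneg[of k]
      mult_right_mono[of C "max C 0" "hnorm ip k"]
    by linarith
  moreover have "2 * (max C 0 * hnorm ip k) \<le> (max C 0)\<^sup>2 + (hnorm ip k)\<^sup>2"
    using sum_squares_bound[of "max C 0" "hnorm ip k"] by simp
  ultimately show ?thesis
    unfolding energy_def hnorm_power2[symmetric] by linarith
qed

lemma energy_parallelogram:
  assumes "a \<in> D" "b \<in> D"
  shows "sqnorm (a - b) = 2 * energy a + 2 * energy b - 4 * energy (sc (1/2) (a + b))"
proof -
  have half: "\<phi> (sc (1/2) (a + b)) = (\<phi> a + \<phi> b) / 2"
    using phi_scale[OF add_mem[OF assms], of "1/2"] phi_add[OF assms] by simp
  have "Re (\<phi> (sc (1/2) (a + b))) = Re (\<phi> a + \<phi> b) / 2"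
    unfolding half by (simp only: Re_divide_numeral)
  then have "energy (sc (1/2) (a + b)) = sqnorm (a + b) / 4 - Re (\<phi> a + \<phi> b)"
    unfolding energy_def by (simp add: sqnorm_scale power2_eq_square)
  then show ?thesis
    using parallelogram_law[of a b] unfolding energy_def by simp
qed

lemma energy_add_scale:
  assumes "a \<in> D" "k \<in> D"
  shows "energy (a + sc t k) =
    energy a + 2 * Re (cnj t * (ip a k - \<phi> k)) + (cmod t)\<^sup>2 * sqnorm k"
  using sqnorm_add_scale[of a t k] phi_add[OF assms(1) scale_mem[OF assms(2)]] phi_scale[OF assms(2)]
  unfolding energy_def by (simp add: algebra_simps)

lemma energy_Inf_le: "k \<in> D \<Longrightarrow> Inf (energy ` D) \<le> energy k"
  using energy_bounded_below by (intro cInf_lower bdd_belowI2) auto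

lemma minimizing_sequence_exists:
  "\<exists>d. (\<forall>n. d n \<in> D) \<and> (\<forall>n. energy (d n) < Inf (energy ` D) + 1 / real (Suc n))"
proof -
  have "\<exists>k\<in>D. energy k < Inf (energy ` D) + 1 / real (Suc n)" for n
    using cInf_lessD[of "energy ` D" "Inf (energy ` D) + 1 / real (Suc n)"] zero_mem by auto
  then show ?thesis
    by metis
qed

lemma minimizing_sequence_Cauchy:
  assumes d: "\<And>n. d n \<in> D" "\<And>n. energy (d n) < Inf (energy ` D) + 1 / real (Suc n)"
  shows "\<forall>e>0. \<exists>N. \<forall>i\<ge>N. \<forall>j\<ge>N. hnorm ip (d i - d j) < e"
proof (intro allI impI)
  fix e :: real
  assume "e > 0"
  then obtain N where N: "inverse (real (Suc N)) < e\<^sup>2 / 4"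
    using reals_Archimedean[of "e\<^sup>2 / 4"] by auto
  have "hnorm ip (d i - d j) < e" if "N \<le> i" "N \<le> j" for i j
  proof -
    have "Inf (energy ` D) \<le> energy (sc (1/2) (d i + d j))"
      using energy_Inf_le add_mem scale_mem d(1) by blast
    then have "sqnorm (d i - d j) < 2 / real (Suc i) + 2 / real (Suc j)"
      using energy_parallelogram[OF d(1) d(1), of i j] d(2)[of i] d(2)[of j] by simp
    also have "\<dots> \<le> 2 / real (Suc N) + 2 / real (Suc N)"
      using that by (intro add_mono divide_left_mono) auto
    also have "\<dots> = 4 * inverse (real (Suc N))"
      by (simp add: divide_inverse)
    also have "\<dots> < e\<^sup>2"
      using N by simp
    finally have "sqrt (sqnorm (d i - d j)) < sqrt (e\<^sup>2)"
      by (rule real_sqrt_less_mono)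
    then show ?thesis
      using \<open>e > 0\<close> by (simp add: hnorm_eq_sqrt_sqnorm)
  qed
  then show "\<exists>N. \<forall>i\<ge>N. \<forall>j\<ge>N. hnorm ip (d i - d j) < e"
    by blast
qed

lemma minimizing_sequence_limit_represents:
  assumes d: "\<And>n. d n \<in> D" "\<And>n. energy (d n) < Inf (energy ` D) + 1 / real (Suc n)"
    and lim: "(\<lambda>n. hnorm ip (d n - h)) \<longlonglongrightarrow> 0" and k: "k \<in> D"
  shows "ip h k = \<phi> k"
proof -
  define z where "z = ip h k - \<phi> k"
  have nonneg: "0 \<le> 2 * Re (cnj t * z) + (cmod t)\<^sup>2 * sqnorm k" for t
  proof -
    have "0 \<le> 1 / real (Suc n) + (2 * Re (cnj t * (ip (d n) k - \<phi> k)) + (cmod t)\<^sup>2 * sqnorm k)"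
      for n
      using energy_Inf_le[OF add_mem[OF d(1)[of n] scale_mem[OF k, of t]]]
        energy_add_scale[OF d(1)[of n] k, of t] d(2)[of n]
      by linarith
    moreover have "(\<lambda>n. 1 / real (Suc n) + (2 * Re (cnj t * (ip (d n) k - \<phi> k))
        + (cmod t)\<^sup>2 * sqnorm k)) \<longlonglongrightarrow> 0 + (2 * Re (cnj t * z) + (cmod t)\<^sup>2 * sqnorm k)"
      unfolding z_def using LIMSEQ_Suc[OF lim_inverse_n']
      by (intro tendsto_intros ip_tendsto_left[OF lim]) simp_all
    ultimately show ?thesis
      by (simp add: LIMSEQ_le_const)
  qed
  have "0 \<le> 0 + 2 * Re (cnj t * z) + (cmod t)\<^sup>2 * (sqnorm k + 1)" for t
    using add_nonneg_nonneg[OF nonneg[of t] zero_le_power2[of "cmod t"]]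
    by (simp add: distrib_left add.assoc)
  then have "(cmod z)\<^sup>2 \<le> 0 * (sqnorm k + 1)"
    using sqnorm_nonneg[of k] by (intro quadratic_nonneg_discriminant) auto
  then show ?thesis
    by (simp add: z_def)
qed

theorem riesz_representation: "\<exists>h. \<forall>k\<in>D. ip h k = \<phi> k"
proof -
  obtain d where d: "\<And>n. d n \<in> D" "\<And>n. energy (d n) < Inf (energy ` D) + 1 / real (Suc n)"
    using minimizing_sequence_exists by blast
  obtain h where "(\<lambda>n. hnorm ip (d n - h)) \<longlonglongrightarrow> 0"
    using cauchy_complete[OF minimizing_sequence_Cauchy[OF d]] by blast
  then show ?thesis
    using minimizing_sequence_limit_represents[OF d] by blast
qed

end

lemma borel_measurable_cnj [measurable]:
  "f \<in> borel_measurable M \<Longrightarrow> (\<lambda>x. cnj (f x :: complex)) \<in> borel_measurable M"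
  by (auto intro: borel_measurable_continuous_on continuous_intros)

context dense_subspace
begin

lemma mult_op_eqI:
  assumes "\<And>g. g \<in> D \<Longrightarrow> ip h g = (LINT x|M. m x * om x f * cnj (th x g))"
  shows "mult_op ip D M m om th f = h"
  unfolding mult_op_def using assms by (intro the_equality) (auto intro!: ip_left_cancel_dense)

lemma mult_dom_mult_opI:
  assumes "f \<in> D"
    and integrable: "\<And>g. g \<in> D \<Longrightarrow> integrable M (\<lambda>x. m x * om x f * cnj (th x g))"
    and represents: "\<And>g. g \<in> D \<Longrightarrow> ip h g = (LINT x|M. m x * om x f * cnj (th x g))"
  shows "f \<in> mult_dom ip D M m om th" and "mult_op ip D M m om th f = h"
proof -
  have "cmod (LINT x|M. m x * om x f * cnj (th x g)) \<le> hnorm ip h * hnorm ip g" if "g \<in> D" for g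
    using cauchy_schwarz[of h g] represents[OF that] by simp
  then show "f \<in> mult_dom ip D M m om th"
    unfolding mult_dom_def using assms by blast
  show "mult_op ip D M m om th f = h"
    using represents by (rule mult_op_eqI)
qed

lemma in_Ldagger_adjoint:
  assumes A: "in_Ldagger ip D Adom A" and y: "y \<in> D"
  shows "adjoint_op ip Adom A y \<in> D"
    and "x \<in> D \<Longrightarrow> ip (A x) y = ip x (adjoint_op ip Adom A y)"
proof -
  have "Adom = D" and "y \<in> adjoint_dom ip Adom A"
    using A y unfolding in_Ldagger_def by auto
  then obtain z where z: "\<And>x. x \<in> D \<Longrightarrow> ip (A x) y = ip x z"
    unfolding adjoint_dom_def by blast
  then have "adjoint_op ip Adom A y = z"
    unfolding adjoint_op_def \<open>Adom = D\<close> by (intro the_equality) (auto intro!: ip_right_cancel_dense)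
  then show "x \<in> D \<Longrightarrow> ip (A x) y = ip x (adjoint_op ip Adom A y)"
    using z by simp
  show "adjoint_op ip Adom A y \<in> D"
    using A y unfolding in_Ldagger_def by blast
qed

end

locale dual_frame_pair = dense_subspace sc ip D
    for sc :: "complex \<Rightarrow> 'h::ab_group_add \<Rightarrow> 'h" and ip D +
  fixes M :: "'x measure" and om th :: "'x \<Rightarrow> 'h \<Rightarrow> complex"
  assumes th_add: "x \<in> space M \<Longrightarrow> a \<in> D \<Longrightarrow> b \<in> D \<Longrightarrow> th x (a + b) = th x a + th x b"
    and th_scale: "x \<in> space M \<Longrightarrow> a \<in> D \<Longrightarrow> th x (sc t a) = t * th x a"
    and th_measurable: "a \<in> D \<Longrightarrow> (\<lambda>x. th x a) \<in> borel_measurable M"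
    and om_measurable: "a \<in> D \<Longrightarrow> (\<lambda>x. om x a) \<in> borel_measurable M"
    and reconstruction: "f \<in> D \<Longrightarrow> g \<in> D \<Longrightarrow>
      integrable M (\<lambda>x. th x f * cnj (om x g)) \<and> ip f g = (LINT x|M. th x f * cnj (om x g))"
    and om_independent: "mu_independent D M om"
begin

lemma reconstruction_conj:
  assumes "f \<in> D" "g \<in> D"
  shows "integrable M (\<lambda>x. om x f * cnj (th x g))"
    and "ip f g = (LINT x|M. om x f * cnj (th x g))"
proof -
  have eq: "(\<lambda>x. om x f * cnj (th x g)) = (\<lambda>x. cnj (th x g * cnj (om x f)))"
    by (simp add: mult.commute)
  show "integrable M (\<lambda>x. om x f * cnj (th x g))"
    unfolding eq using reconstruction[OF assms(2,1)] integrable_cnj by blast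
  have "ip g f = (LINT x|M. th x g * cnj (om x f))"
    using reconstruction[OF assms(2,1)] by blast
  then show "ip f g = (LINT x|M. om x f * cnj (th x g))"
    unfolding eq Bochner_Integration.integral_cnj by (metis ip_commute)
qed

lemma mult_op_represents:
  assumes f: "f \<in> mult_dom ip D M m om th" and g: "g \<in> D"
  shows "ip (mult_op ip D M m om th f) g = (LINT x|M. m x * om x f * cnj (th x g))"
proof -
  define \<phi> where "\<phi> g = (LINT x|M. m x * om x f * cnj (th x g))" for g
  obtain C where integrable: "\<And>g. g \<in> D \<Longrightarrow> integrable M (\<lambda>x. m x * om x f * cnj (th x g))"
    and bounded: "\<And>g. g \<in> D \<Longrightarrow> cmod (\<phi> g) \<le> C * hnorm ip g"
    using f unfolding mult_dom_def \<phi>_def by blast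
  interpret dense_bounded_antilinear sc ip D \<phi> C
  proof
    fix a b assume "a \<in> D" "b \<in> D"
    then show "\<phi> (a + b) = \<phi> a + \<phi> b"
      unfolding \<phi>_def using integrable
      by (simp add: th_add distrib_left flip: Bochner_Integration.integral_add cong: Bochner_Integration.integral_cong)
  next
    fix a t assume "a \<in> D"
    then show "\<phi> (sc t a) = cnj t * \<phi> a"
      unfolding \<phi>_def
      by (simp add: th_scale mult.left_commute flip: integral_mult_right_zero cong: Bochner_Integration.integral_cong)
  qed (fact bounded)
  obtain h where h: "\<forall>k\<in>D. ip h k = \<phi> k"
    using riesz_representation by blast
  then have "mult_op ip D M m om th f = h"
    unfolding \<phi>_def by (intro mult_op_eqI) simp
  with g h show ?thesis
    unfolding \<phi>_def by simp
qed

lemma adjoint_mult_op_ae: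
  assumes L: "in_Ldagger ip D (mult_dom ip D M m om th) (mult_op ip D M m om th)"
    and m: "m \<in> borel_measurable M" and k: "k \<in> D"
  shows "AE x in M. th x (adjoint_op ip (mult_dom ip D M m om th) (mult_op ip D M m om th) k)
    = cnj (m x) * th x k"
proof -
  define k' where "k' = adjoint_op ip (mult_dom ip D M m om th) (mult_op ip D M m om th) k"
  have k': "k' \<in> D" and adjoint: "\<And>g. g \<in> D \<Longrightarrow> ip (mult_op ip D M m om th g) k = ip g k'"
    using in_Ldagger_adjoint[OF L k] by (simp_all add: k'_def)
  have dom: "mult_dom ip D M m om th = D"
    using L unfolding in_Ldagger_def by blast
  define \<xi> where "\<xi> x = m x * cnj (th x k) - cnj (th x k')" for x
  have "integrable M (\<lambda>x. \<xi> x * om x g) \<and> (LINT x|M. \<xi> x * om x g) = 0" if g: "g \<in> D" for g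
  proof -
    have eq: "(\<lambda>x. \<xi> x * om x g) = (\<lambda>x. m x * om x g * cnj (th x k) - om x g * cnj (th x k'))"
      by (auto simp: \<xi>_def algebra_simps)
    have "integrable M (\<lambda>x. m x * om x g * cnj (th x k))"
      using g k dom unfolding mult_dom_def by blast
    moreover have "integrable M (\<lambda>x. om x g * cnj (th x k'))"
      using reconstruction_conj(1)[OF g k'] .
    moreover have "(LINT x|M. m x * om x g * cnj (th x k)) = (LINT x|M. om x g * cnj (th x k'))"
      using mult_op_represents[of g m k] adjoint[OF g] reconstruction_conj(2)[OF g k'] g k dom
      by simp
    ultimately show ?thesis
      unfolding eq by simp
  qed
  moreover have "\<xi> \<in> borel_measurable M"
    unfolding \<xi>_def using th_measurable[OF k] th_measurable[OF k'] m by measurable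
  ultimately have "AE x in M. \<xi> x = 0"
    using om_independent unfolding mu_independent_def by blast
  then show ?thesis
    unfolding k'_def[symmetric] \<xi>_def
    by eventually_elim (metis complex_cnj_cnj complex_cnj_mult eq_iff_diff_eq_0)
qed

lemma ip_mult_op_mult_op:
  assumes L1: "in_Ldagger ip D (mult_dom ip D M m1 om th) (mult_op ip D M m1 om th)"
    and L2: "in_Ldagger ip D (mult_dom ip D M m2 om th) (mult_op ip D M m2 om th)"
    and m1: "m1 \<in> borel_measurable M" and m2: "m2 \<in> borel_measurable M"
    and f: "f \<in> D" and g: "g \<in> D"
  shows "integrable M (\<lambda>x. m1 x * m2 x * om x f * cnj (th x g))"
    and "ip (mult_op ip D M m1 om th (mult_op ip D M m2 om th f)) g =
      (LINT x|M. m1 x * m2 x * om x f * cnj (th x g))"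
proof -
  define B1 where "B1 = adjoint_op ip (mult_dom ip D M m1 om th) (mult_op ip D M m1 om th)"
  define B2 where "B2 = adjoint_op ip (mult_dom ip D M m2 om th) (mult_op ip D M m2 om th)"
  have B1g: "B1 g \<in> D" and B21g: "B2 (B1 g) \<in> D"
    using in_Ldagger_adjoint(1)[OF L1 g] in_Ldagger_adjoint(1)[OF L2] by (simp_all add: B1_def B2_def)
  have "mult_op ip D M m2 om th f \<in> D"
    using L2 f unfolding in_Ldagger_def by blast
  then have "ip (mult_op ip D M m1 om th (mult_op ip D M m2 om th f)) g = ip f (B2 (B1 g))"
    using in_Ldagger_adjoint(2)[OF L1 g] in_Ldagger_adjoint(2)[OF L2 B1g f] by (simp add: B1_def B2_def)
  also have "\<dots> = (LINT x|M. om x f * cnj (th x (B2 (B1 g))))"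
    by (rule reconstruction_conj(2)[OF f B21g])
  finally have ip_eq: "ip (mult_op ip D M m1 om th (mult_op ip D M m2 om th f)) g =
    (LINT x|M. om x f * cnj (th x (B2 (B1 g))))" .
  have ae: "AE x in M. om x f * cnj (th x (B2 (B1 g))) = m1 x * m2 x * om x f * cnj (th x g)"
    using adjoint_mult_op_ae[OF L2 m2 B1g] adjoint_mult_op_ae[OF L1 m1 g]
    unfolding B1_def B2_def by eventually_elim simp
  have meas: "(\<lambda>x. om x f * cnj (th x (B2 (B1 g)))) \<in> borel_measurable M"
    "(\<lambda>x. m1 x * m2 x * om x f * cnj (th x g)) \<in> borel_measurable M"
    using om_measurable[OF f] th_measurable[OF B21g] th_measurable[OF g] m1 m2 by measurable
  show "integrable M (\<lambda>x. m1 x * m2 x * om x f * cnj (th x g))"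
    using integrable_cong_AE_imp[OF reconstruction_conj(1)[OF f B21g] meas(2) ae] .
  show "ip (mult_op ip D M m1 om th (mult_op ip D M m2 om th f)) g =
      (LINT x|M. m1 x * m2 x * om x f * cnj (th x g))"
    unfolding ip_eq by (rule integral_cong_AE[OF meas ae])
qed

lemma mult_op_mult_op:
  assumes "in_Ldagger ip D (mult_dom ip D M m1 om th) (mult_op ip D M m1 om th)"
    and "in_Ldagger ip D (mult_dom ip D M m2 om th) (mult_op ip D M m2 om th)"
    and "m1 \<in> borel_measurable M" and "m2 \<in> borel_measurable M" and f: "f \<in> D"
  shows "f \<in> mult_dom ip D M (\<lambda>x. m1 x * m2 x) om th"
    and "mult_op ip D M m1 om th (mult_op ip D M m2 om th f) =
      mult_op ip D M (\<lambda>x. m1 x * m2 x) om th f"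
  using mult_dom_mult_opI[where m = "\<lambda>x. m1 x * m2 x" and om = om and th = th, OF f ip_mult_op_mult_op[OF assms]]
  by simp_all

end

lemma dual_frame_pair_if_riesz_distribution_basis:
  assumes "rigged_reflexive_frechet sc ip D p"
    and "riesz_distribution_basis sc ip D p M om"
    and "dual_frame sc ip D p M om th"
  shows "dual_frame_pair sc ip D M om th"
proof -
  from assms(1) have "complex_hilbert sc ip" "0 \<in> D" "\<forall>x\<in>D. \<forall>y\<in>D. x + y \<in> D"
    "\<forall>a. \<forall>x\<in>D. sc a x \<in> D" "\<forall>x. \<forall>e>0. \<exists>d\<in>D. hnorm ip (x - d) < e"
    unfolding rigged_reflexive_frechet_def by simp_all
  moreover from assms(2) have "\<forall>a\<in>D. (\<lambda>x. om x a) \<in> borel_measurable M"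
    "mu_independent D M om"
    unfolding riesz_distribution_basis_def distribution_frame_def weakly_meas_def by simp_all
  moreover from assms(3) have "\<forall>x\<in>space M. th x \<in> dual_space sc D p"
    "\<forall>a\<in>D. (\<lambda>x. th x a) \<in> borel_measurable M"
    "\<forall>f\<in>D. \<forall>g\<in>D. integrable M (\<lambda>x. th x f * cnj (om x g)) \<and>
      ip f g = (LINT x|M. th x f * cnj (om x g))"
    unfolding dual_frame_def distribution_frame_def weakly_meas_def by simp_all
  ultimately show ?thesis
    by unfold_locales (simp_all add: dual_space_def)
qed

theorem proposition5p2:
  fixes sc :: "complex \<Rightarrow> 'h::ab_group_add \<Rightarrow> 'h"
    and ip :: "'h \<Rightarrow> 'h \<Rightarrow> complex"
    and D :: "'h set"
    and p :: "nat \<Rightarrow> 'h \<Rightarrow> real"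
    and M :: "'x measure"
    and om th :: "'x \<Rightarrow> 'h \<Rightarrow> complex"
    and m1 m2 :: "'x \<Rightarrow> complex"
  assumes "rigged_reflexive_frechet sc ip D p"
    and "sigma_finite_measure M"
    and "riesz_distribution_basis sc ip D p M om"
    and "dual_frame sc ip D p M om th"
    and "m1 \<in> borel_measurable M"
    and "m2 \<in> borel_measurable M"
    and "in_Ldagger ip D (mult_dom ip D M m1 om th) (mult_op ip D M m1 om th)"
    and "in_Ldagger ip D (mult_dom ip D M m2 om th) (mult_op ip D M m2 om th)"
  shows "\<forall>f\<in>D. f \<in> mult_dom ip D M (\<lambda>x. m1 x * m2 x) om th \<and>
           mult_op ip D M m1 om th (mult_op ip D M m2 om th f) =
           mult_op ip D M (\<lambda>x. m1 x * m2 x) om th f"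
proof -
  interpret dual_frame_pair sc ip D M om th
    using assms(1,3,4) by (rule dual_frame_pair_if_riesz_distribution_basis)
  show ?thesis
    using mult_op_mult_op[OF assms(7,8,5,6)] by blast
qed

end
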